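(* Assume the setting and Assumptions A1, A2 described in the context, and assume $\Phi^*:=\inf_v\Phi(v)>-\infty$. Let $v_1\in\mathbb{R}^{d_1}$, let $\widehat\nabla\Phi(v_1),\widehat\nabla\Phi(v_2),\dots\in\mathbb{R}^{d_1}$ be arbitrary vectors (hypergradient estimates), and define $v_{k+1}=v_k-\alpha\widehat\nabla\Phi(v_k)$ with $\alpha=\frac{1}{4L_v}$, where $$L_v:=\bar L_{f_v}+\frac{L}{\mu}\big(L_{f_v}+\bar L_{f_\theta}\big)+\frac{L^2}{\mu^2}L_{f_\theta}+D_1\Big(\frac{\bar L_{\ell_{\theta,v}}}{\mu}+\frac{L}{\mu^2}\big(\bar L_{\ell_{\theta,\theta}}+L_{\ell_{\theta,v}}\big)+\frac{L^2L_{\ell_{\theta,\theta}}}{\mu^3}\Big).$$ Then for every $K\ge1$, $$\frac{1}{16L_v}\sum_{k=1}^K\|\nabla\Phi(v_k)\|^2\le\Phi(v_1)-\Phi^*+\frac{3}{16L_v}\sum_{k=1}^K\|\nabla\Phi(v_k)-\widehat\nabla\Phi(v_k)\|^2.$$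
   Context: Let $d_1,d_2\ge1$, $R>0$, $\Theta=\{\theta\in\mathbb{R}^{d_2}:\|\theta\|\le R\}$; norms are Euclidean. Let $q$ be a probability distribution on a sample space and $\{p(\cdot;v,\theta)\}$ a family of probability densities indexed by $(v,\theta)\in\mathbb{R}^{d_1}\times\mathbb{R}^{d_2}$. Put $l(v,\theta,\xi):=-\log p(\xi;v,\theta)$, $\ell(v,\theta):=\mathbb{E}_{\xi\sim q}[l(v,\theta,\xi)]$, $\theta^*(v):=\arg\min_{\theta\in\Theta}\ell(v,\theta)$. Let $f:\mathbb{R}^{d_1}\times\mathbb{R}^{d_2}\to\mathbb{R}$ be differentiable and $\Phi(v):=f(v,\theta^*(v))$, with gradient $\nabla\Phi(v)=\nabla_vf(v,\theta^*(v))-(\nabla^2_{\theta,v}\ell(v,\theta^*(v)))^\top(\nabla^2_{\theta,\theta}\ell(v,\theta^*(v)))^{-1}\nabla_\theta f(v,\theta^*(v))$. A1: (i) there are $\mu,L>0$ such that for every $\xi$, $\theta\mapsto l(v,\theta,\xi)$ is $\mu$-strongly convex, $l(\cdot,\cdot,\xi)$ is twice continuously differentiable, and its gradient in $(v,\theta)$ is $L$-Lipschitz jointly, uniformly in $\xi$; (ii) for each $v$, $\theta\mapsto\nabla^2_{\theta,v}\ell(v,\theta)$, $\theta\mapsto\nabla^2_{\theta,\theta}\ell(v,\theta)$ are $L_{\ell_{\theta,v}}$-, $L_{\ell_{\theta,\theta}}$-Lipschitz; for each $\theta$, $v\mapsto\nabla^2_{\theta,v}\ell(v,\theta)$, $v\mapsto\nabla^2_{\theta,\theta}\ell(v,\theta)$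 are $\bar L_{\ell_{\theta,v}}$-, $\bar L_{\ell_{\theta,\theta}}$-Lipschitz. A2: (i) for each $v$, $\theta\mapsto\nabla_vf(v,\theta)$ is $L_{f_v}$-Lipschitz and $\theta\mapsto\nabla_\theta f(v,\theta)$ is $L_{f_\theta}$-Lipschitz; for each $\theta$, $v\mapsto\nabla_vf(v,\theta)$ is $\bar L_{f_v}$-Lipschitz and $v\mapsto\nabla_\theta f(v,\theta)$ is $\bar L_{f_\theta}$-Lipschitz; (ii) $\|\nabla_\theta f(v,\theta)\|\le D_1$ for all $v,\theta$. *)

theory Defs
  imports "HOL-Probability.Probability"
begin

definition strongly_convex_on :: "real \<Rightarrow> ('a::real_normed_vector) set \<Rightarrow> ('a \<Rightarrow> real) \<Rightarrow> bool" where
  "strongly_convex_on mu S g \<longleftrightarrow> convex S \<and>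
     (\<forall>x\<in>S. \<forall>y\<in>S. \<forall>t::real. 0 \<le> t \<and> t \<le> 1 \<longrightarrow>
        g (t *\<^sub>R x + (1 - t) *\<^sub>R y) \<le> t * g x + (1 - t) * g y - mu / 2 * t * (1 - t) * (norm (x - y))\<^sup>2)"

definition lfun :: "('s \<Rightarrow> 'v \<Rightarrow> 't \<Rightarrow> real) \<Rightarrow> 'v \<Rightarrow> 't \<Rightarrow> 's \<Rightarrow> real" where
  "lfun p v \<theta> \<xi> = - ln (p \<xi> v \<theta>)"

definition ell :: "'s measure \<Rightarrow> ('s \<Rightarrow> 'v \<Rightarrow> 't \<Rightarrow> real) \<Rightarrow> 'v \<Rightarrow> 't \<Rightarrow> real" where
  "ell q p v \<theta> = (\<integral>\<xi>. lfun p v \<theta> \<xi> \<partial>q)"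

definition theta_star :: "('v \<Rightarrow> 't::real_normed_vector \<Rightarrow> real) \<Rightarrow> real \<Rightarrow> 'v \<Rightarrow> 't" where
  "theta_star ellf R v = (THE \<theta>. \<theta> \<in> cball 0 R \<and> (\<forall>\<theta>'\<in>cball 0 R. ellf v \<theta> \<le> ellf v \<theta>'))"

text \<open>H_{theta v}(v,theta) is the derivative of v |-> grad_theta ell(v,theta),
  H_{theta theta}(v,theta) that of theta |-> grad_theta ell(v,theta); transpose = adjoint.\<close>
definition hypergrad ::
  "('v::euclidean_space \<Rightarrow> 't::euclidean_space \<Rightarrow> 'v) \<Rightarrow> ('v \<Rightarrow> 't \<Rightarrow> 't)
   \<Rightarrow> ('v \<Rightarrow> 't \<Rightarrow> ('v \<Rightarrow>\<^sub>L 't)) \<Rightarrow> ('v \<Rightarrow> 't \<Rightarrow> ('t \<Rightarrow>\<^sub>L 't)) \<Rightarrow> ('v \<Rightarrow> 't) \<Rightarrow> 'v \<Rightarrow> 'v" where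
  "hypergrad fv ft Htv Htt ts v =
     fv v (ts v) - adjoint (blinfun_apply (Htv v (ts v))) (inv (blinfun_apply (Htt v (ts v))) (ft v (ts v)))"

definition Lv_const :: "real \<Rightarrow> real \<Rightarrow> real \<Rightarrow> real \<Rightarrow> real \<Rightarrow> real \<Rightarrow> real \<Rightarrow> real \<Rightarrow> real \<Rightarrow> real \<Rightarrow> real \<Rightarrow> real" where
  "Lv_const L \<mu> Lfv Lft Lbfv Lbft D1 Llv Llt Lblv Lblt =
     Lbfv + L / \<mu> * (Lfv + Lbft) + L\<^sup>2 / \<mu>\<^sup>2 * Lft
     + D1 * (Lblv / \<mu> + L / \<mu>\<^sup>2 * (Lblt + Llv) + L\<^sup>2 * Llt / \<mu>^3)"

end

theory Submission
  imports Defs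
begin

(*
  Strong convexity of ell(v, .) and the L-Lipschitz joint gradient of l make the mixed difference
  theta |-> ell(v1, theta) - ell(v2, theta) an (L |v1 - v2|)-Lipschitz function.  Adding the quadratic
  growth of ell(v1, .) and ell(v2, .) at their minimisers over the ball then shows that theta* is
  (L/mu)-Lipschitz; the same mixed difference gives |H_{theta v}| <= L, while strong convexity gives
  H_{theta theta} >= mu.  Perturbing grad_v f - H_{theta v}^T H_{theta theta}^{-1} grad_theta f term by
  term shows that grad Phi is L_v-Lipschitz.  For an L_v-smooth Phi, one step of length 1/(4 L_v) along
  an inexact gradient h decreases Phi by at least |grad Phi|^2/(16 L_v) - 3 |grad Phi - h|^2/(16 L_v),
  and these decreases telescope to Phi(v_1) - inf Phi.
*)

section \<open>Difference quotients and derivatives of Lipschitz maps\<close>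

lemma has_derivative_difference_quotient_at_right:
  fixes F :: "'a::real_normed_vector \<Rightarrow> 'b::real_normed_vector"
  assumes "(F has_derivative F') (at x)"
  shows "((\<lambda>t. (1/t) *\<^sub>R (F (x + t *\<^sub>R h) - F x)) \<longlongrightarrow> F' h) (at_right 0)"
proof -
  have "((\<lambda>t::real. x + t *\<^sub>R h) has_derivative (\<lambda>t. t *\<^sub>R h)) (at 0)"
    by (auto intro!: derivative_eq_intros)
  from has_derivative_compose[OF this, of F F'] assms
  have "((\<lambda>t. F (x + t *\<^sub>R h)) has_derivative (\<lambda>t. t *\<^sub>R F' h)) (at 0)"
    using has_derivative_linear[OF assms] by (simp add: linear_scale)
  then have "((\<lambda>t. norm (F (x + t *\<^sub>R h) - F x - t *\<^sub>R F' h) / norm t) \<longlongrightarrow> 0) (at_right 0)"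
    unfolding has_derivative_iff_norm by (simp add: filterlim_at_split)
  moreover have "\<forall>\<^sub>F t in at_right 0. norm (F (x + t *\<^sub>R h) - F x - t *\<^sub>R F' h) / norm t
      = norm ((1/t) *\<^sub>R (F (x + t *\<^sub>R h) - F x) - F' h)"
    using eventually_at_right_less[of "0::real"]
  proof (rule eventually_mono)
    fix t :: real assume "0 < t"
    then have "(1/t) *\<^sub>R (F (x + t *\<^sub>R h) - F x) - F' h = (1/t) *\<^sub>R (F (x + t *\<^sub>R h) - F x - t *\<^sub>R F' h)"
      by (simp add: algebra_simps)
    with \<open>0 < t\<close> show "norm (F (x + t *\<^sub>R h) - F x - t *\<^sub>R F' h) / norm t
      = norm ((1/t) *\<^sub>R (F (x + t *\<^sub>R h) - F x) - F' h)" by simp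
  qed
  ultimately have "((\<lambda>t. norm ((1/t) *\<^sub>R (F (x + t *\<^sub>R h) - F x) - F' h)) \<longlongrightarrow> 0) (at_right 0)"
    by (rule Lim_transform_eventually)
  then show ?thesis
    by (subst Lim_null) (rule tendsto_norm_zero_cancel)
qed

lemma lipschitz_on_has_derivative_bound:
  fixes F :: "'a::real_normed_vector \<Rightarrow> 'b::real_normed_vector"
  assumes lip: "C-lipschitz_on UNIV F" and deriv: "(F has_derivative F') (at x)"
  shows "norm (F' h) \<le> C * norm h"
proof (rule tendsto_le[OF _ tendsto_const])
  show "((\<lambda>t. norm ((1/t) *\<^sub>R (F (x + t *\<^sub>R h) - F x))) \<longlongrightarrow> norm (F' h)) (at_right 0)"
    by (intro tendsto_norm has_derivative_difference_quotient_at_right[OF deriv])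
  show "\<forall>\<^sub>F t in at_right 0. norm ((1/t) *\<^sub>R (F (x + t *\<^sub>R h) - F x)) \<le> C * norm h"
    using eventually_at_right_less[of "0::real"]
  proof (rule eventually_mono)
    fix t :: real assume "0 < t"
    have "norm (F (x + t *\<^sub>R h) - F x) \<le> C * (t * norm h)"
      using lipschitz_on_normD[OF lip, of "x + t *\<^sub>R h" x] \<open>0 < t\<close> by simp
    moreover have "norm ((1/t) *\<^sub>R (F (x + t *\<^sub>R h) - F x)) = norm (F (x + t *\<^sub>R h) - F x) / t"
      using \<open>0 < t\<close> by (simp del: scaleR_right_diff_distrib)
    ultimately show "norm ((1/t) *\<^sub>R (F (x + t *\<^sub>R h) - F x)) \<le> C * norm h"
      using \<open>0 < t\<close> by (simp only:) (simp add: field_simps)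
  qed
qed simp

lemma lipschitz_on_gradient_norm_le:
  fixes f :: "'a::real_inner \<Rightarrow> real"
  assumes "C-lipschitz_on UNIV f" and "(f has_derivative (\<lambda>h. inner g h)) (at x)"
  shows "norm g \<le> C"
proof -
  have "(norm g)\<^sup>2 \<le> C * norm g"
    using lipschitz_on_has_derivative_bound[OF assms, of g] by (simp add: power2_norm_eq_inner)
  then show ?thesis
    using lipschitz_on_nonneg[OF assms(1)] by (cases "g = 0") (auto simp: power2_eq_square)
qed

lemma lipschitz_on_derivative_norm_le:
  assumes "C-lipschitz_on UNIV F" and "(F has_derivative blinfun_apply A) (at x)"
  shows "norm A \<le> C"
  using lipschitz_on_nonneg[OF assms(1)] lipschitz_on_has_derivative_bound[OF assms]
  by (intro norm_blinfun_bound)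

section \<open>Strong convexity\<close>

lemma strongly_convex_on_subset:
  assumes "strongly_convex_on \<mu> S f" "T \<subseteq> S" "convex T"
  shows "strongly_convex_on \<mu> T f"
  using assms unfolding strongly_convex_on_def by blast

lemma strongly_convex_on_first_order:
  fixes f :: "'a::real_inner \<Rightarrow> real"
  assumes sc: "strongly_convex_on \<mu> UNIV f" and deriv: "(f has_derivative (\<lambda>h. inner g h)) (at x)"
  shows "f x + inner g (y - x) + \<mu>/2 * (norm (y - x))\<^sup>2 \<le> f y"
proof -
  let ?d = "y - x"
  have "inner g ?d \<le> f y - f x - \<mu>/2 * (1 - 0) * (norm ?d)\<^sup>2"
  proof (rule tendsto_le[OF _ _ has_derivative_difference_quotient_at_right[OF deriv]])
    show "((\<lambda>t. f y - f x - \<mu>/2 * (1 - t) * (norm ?d)\<^sup>2) \<longlongrightarrow> f y - f x - \<mu>/2 * (1 - 0) * (norm ?d)\<^sup>2)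
        (at_right 0)"
      by (intro tendsto_intros)
    have "\<forall>\<^sub>F t in at_right (0::real). t < 1"
      using eventually_at_right_field by (metis zero_less_one)
    with eventually_at_right_less[of "0::real"]
    show "\<forall>\<^sub>F t in at_right 0. (1/t) *\<^sub>R (f (x + t *\<^sub>R ?d) - f x) \<le> f y - f x - \<mu>/2 * (1 - t) * (norm ?d)\<^sup>2"
    proof eventually_elim
      case (elim t)
      have "f (t *\<^sub>R y + (1 - t) *\<^sub>R x) \<le> t * f y + (1 - t) * f x - \<mu>/2 * t * (1 - t) * (norm ?d)\<^sup>2"
        using sc elim unfolding strongly_convex_on_def by simp
      moreover have "t *\<^sub>R y + (1 - t) *\<^sub>R x = x + t *\<^sub>R ?d" by (simp add: algebra_simps)
      ultimately have "f (x + t *\<^sub>R ?d) - f x \<le> t * (f y - f x - \<mu>/2 * (1 - t) * (norm ?d)\<^sup>2)"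
        by (simp add: algebra_simps)
      with elim show ?case by (simp add: field_simps)
    qed
  qed simp
  then show ?thesis by simp
qed

lemma strongly_convex_on_gradient_monotone:
  fixes f :: "'a::real_inner \<Rightarrow> real"
  assumes sc: "strongly_convex_on \<mu> UNIV f" and grad: "\<And>x. (f has_derivative (\<lambda>h. inner (G x) h)) (at x)"
  shows "\<mu> * (norm (y - x))\<^sup>2 \<le> inner (G y - G x) (y - x)"
  using strongly_convex_on_first_order[OF sc grad, of x y] strongly_convex_on_first_order[OF sc grad, of y x]
  by (simp add: norm_minus_commute inner_diff_left inner_diff_right)

lemma strongly_convex_on_hessian_coercive:
  fixes f :: "'a::real_inner \<Rightarrow> real"
  assumes sc: "strongly_convex_on \<mu> UNIV f" and grad: "\<And>x. (f has_derivative (\<lambda>h. inner (G x) h)) (at x)"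
    and hess: "(G has_derivative B) (at x)"
  shows "\<mu> * (norm k)\<^sup>2 \<le> inner (B k) k"
proof (rule tendsto_le[OF _ _ tendsto_const])
  show "((\<lambda>t. inner ((1/t) *\<^sub>R (G (x + t *\<^sub>R k) - G x)) k) \<longlongrightarrow> inner (B k) k) (at_right 0)"
    by (intro tendsto_intros has_derivative_difference_quotient_at_right[OF hess])
  show "\<forall>\<^sub>F t in at_right 0. \<mu> * (norm k)\<^sup>2 \<le> inner ((1/t) *\<^sub>R (G (x + t *\<^sub>R k) - G x)) k"
    using eventually_at_right_less[of "0::real"]
  proof (rule eventually_mono)
    fix t :: real assume "0 < t"
    have "\<mu> * (norm (t *\<^sub>R k))\<^sup>2 \<le> inner (G (x + t *\<^sub>R k) - G x) (t *\<^sub>R k)"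
      using strongly_convex_on_gradient_monotone[OF sc grad, of "x + t *\<^sub>R k" x] by simp
    then have "t * (t * (\<mu> * (norm k)\<^sup>2)) \<le> t * inner (G (x + t *\<^sub>R k) - G x) k"
      by (simp add: power_mult_distrib power2_eq_square ac_simps)
    then have "t * (\<mu> * (norm k)\<^sup>2) \<le> inner (G (x + t *\<^sub>R k) - G x) k"
      using \<open>0 < t\<close> by simp
    moreover have "inner ((1/t) *\<^sub>R (G (x + t *\<^sub>R k) - G x)) k = inner (G (x + t *\<^sub>R k) - G x) k / t"
      by (simp only: inner_scaleR_left) simp
    ultimately show "\<mu> * (norm k)\<^sup>2 \<le> inner ((1/t) *\<^sub>R (G (x + t *\<^sub>R k) - G x)) k"
      using \<open>0 < t\<close> by (simp only:) (simp add: field_simps)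
  qed
qed simp

lemma strongly_convex_on_minimizer_growth:
  fixes f :: "'a::real_normed_vector \<Rightarrow> real"
  assumes sc: "strongly_convex_on \<mu> C f" and a: "a \<in> C" and min: "\<And>y. y \<in> C \<Longrightarrow> f a \<le> f y"
    and x: "x \<in> C"
  shows "f a + \<mu>/2 * (norm (x - a))\<^sup>2 \<le> f x"
proof -
  have "\<mu>/2 * (norm (x - a))\<^sup>2 \<le> f x - f a"
  proof (rule field_le_mult_one_interval)
    fix t :: real assume t: "0 < t" "t < 1"
    then have "t *\<^sub>R a + (1 - t) *\<^sub>R x \<in> C"
      using sc a x unfolding strongly_convex_on_def convex_def by simp
    then have "f a \<le> f (t *\<^sub>R a + (1 - t) *\<^sub>R x)" by (rule min)
    also have "\<dots> \<le> t * f a + (1 - t) * f x - \<mu>/2 * t * (1 - t) * (norm (a - x))\<^sup>2"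
      using sc a x t unfolding strongly_convex_on_def by simp
    finally have "(1 - t) * (t * (\<mu>/2 * (norm (x - a))\<^sup>2)) \<le> (1 - t) * (f x - f a)"
      by (simp add: norm_minus_commute algebra_simps)
    with t show "t * (\<mu>/2 * (norm (x - a))\<^sup>2) \<le> f x - f a" by simp
  qed
  then show ?thesis by simp
qed

lemma strongly_convex_on_integral:
  fixes g :: "'a::real_normed_vector \<Rightarrow> 's \<Rightarrow> real"
  assumes M: "prob_space M" and int: "\<And>x. integrable M (g x)"
    and sc: "\<And>\<xi>. \<xi> \<in> space M \<Longrightarrow> strongly_convex_on \<mu> S (\<lambda>x. g x \<xi>)"
  shows "strongly_convex_on \<mu> S (\<lambda>x. \<integral>\<xi>. g x \<xi> \<partial>M)"
  unfolding strongly_convex_on_def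
proof (intro conjI ballI allI impI)
  interpret prob_space M by (rule M)
  show "convex S" using sc not_empty unfolding strongly_convex_on_def by blast
  fix x y and t :: real assume "x \<in> S" "y \<in> S" and t: "0 \<le> t \<and> t \<le> 1"
  let ?c = "\<mu>/2 * t * (1 - t) * (norm (x - y))\<^sup>2"
  have "(\<integral>\<xi>. g (t *\<^sub>R x + (1 - t) *\<^sub>R y) \<xi> \<partial>M) \<le> (\<integral>\<xi>. t * g x \<xi> + (1 - t) * g y \<xi> - ?c \<partial>M)"
    using sc \<open>x \<in> S\<close> \<open>y \<in> S\<close> t int unfolding strongly_convex_on_def by (intro integral_mono) auto
  also have "\<dots> = t * (\<integral>\<xi>. g x \<xi> \<partial>M) + (1 - t) * (\<integral>\<xi>. g y \<xi> \<partial>M) - ?c"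
    using int by (simp add: prob_space)
  finally show "(\<integral>\<xi>. g (t *\<^sub>R x + (1 - t) *\<^sub>R y) \<xi> \<partial>M)
      \<le> t * (\<integral>\<xi>. g x \<xi> \<partial>M) + (1 - t) * (\<integral>\<xi>. g y \<xi> \<partial>M) - ?c" .
qed

section \<open>Dependence of the lower-level problem on the upper-level variable\<close>

lemma lipschitz_on_integral:
  fixes g :: "'a::metric_space \<Rightarrow> 's \<Rightarrow> real"
  assumes M: "prob_space M" and int: "\<And>x. integrable M (g x)"
    and lip: "\<And>\<xi>. \<xi> \<in> space M \<Longrightarrow> C-lipschitz_on S (\<lambda>x. g x \<xi>)"
  shows "C-lipschitz_on S (\<lambda>x. \<integral>\<xi>. g x \<xi> \<partial>M)"
proof (rule lipschitz_onI)
  interpret prob_space M by (rule M)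
  show "0 \<le> C" using lip not_empty lipschitz_on_nonneg by blast
  fix x y assume "x \<in> S" "y \<in> S"
  have "\<bar>\<integral>\<xi>. g x \<xi> - g y \<xi> \<partial>M\<bar> \<le> (\<integral>\<xi>. \<bar>g x \<xi> - g y \<xi>\<bar> \<partial>M)"
    by (rule integral_abs_bound)
  also have "\<dots> \<le> (\<integral>\<xi>. C * dist x y \<partial>M)"
    using lipschitz_onD[OF lip] \<open>x \<in> S\<close> \<open>y \<in> S\<close> int by (intro integral_mono) (auto simp: dist_real_def)
  finally show "dist (\<integral>\<xi>. g x \<xi> \<partial>M) (\<integral>\<xi>. g y \<xi> \<partial>M) \<le> C * dist x y"
    using int by (simp add: prob_space dist_real_def)
qed

lemma lipschitz_on_parameter_difference:
  fixes l :: "'v::real_inner \<Rightarrow> 't::real_inner \<Rightarrow> real" and gl :: "'v \<Rightarrow> 't \<Rightarrow> 'v \<times> 't"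
  assumes grad: "\<And>v \<theta>. ((\<lambda>z. l (fst z) (snd z)) has_derivative (\<lambda>h. inner (gl v \<theta>) h)) (at (v, \<theta>))"
    and lip: "L-lipschitz_on UNIV (\<lambda>z. gl (fst z) (snd z))"
  shows "(L * dist v1 v2)-lipschitz_on UNIV (\<lambda>\<theta>. l v1 \<theta> - l v2 \<theta>)"
proof (rule lipschitz_onI)
  show "0 \<le> L * dist v1 v2" using lipschitz_on_nonneg[OF lip] by simp
  have partial: "((\<lambda>\<theta>. l v \<theta>) has_derivative (\<lambda>k. inner (gl v \<theta>) (0, k))) (at \<theta>)" for v \<theta>
    using has_derivative_compose[OF has_derivative_Pair[OF has_derivative_const has_derivative_ident] grad]
    by simp
  fix a b :: 't
  have "norm ((l v1 a - l v2 a) - (l v1 b - l v2 b)) \<le> L * dist v1 v2 * norm (a - b)"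
  proof (rule differentiable_bound[where S = UNIV])
    fix \<theta> :: 't
    show "((\<lambda>\<theta>. l v1 \<theta> - l v2 \<theta>) has_derivative (\<lambda>k. inner (gl v1 \<theta> - gl v2 \<theta>) (0, k))) (at \<theta> within UNIV)"
      using has_derivative_diff[OF partial partial] by (simp add: inner_diff_left)
    have "norm (gl v1 \<theta> - gl v2 \<theta>) \<le> L * dist v1 v2"
      using lipschitz_on_normD[OF lip, of "(v1, \<theta>)" "(v2, \<theta>)"] by (simp add: dist_norm)
    then have "\<bar>inner (gl v1 \<theta> - gl v2 \<theta>) (0, k)\<bar> \<le> L * dist v1 v2 * norm k" for k
      using Cauchy_Schwarz_ineq2[of "gl v1 \<theta> - gl v2 \<theta>" "(0, k)"]
      by (simp add: norm_Pair) (meson mult_right_mono norm_ge_zero order_trans)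
    then show "onorm (\<lambda>k. inner (gl v1 \<theta> - gl v2 \<theta>) (0, k)) \<le> L * dist v1 v2"
      using lipschitz_on_nonneg[OF lip] by (intro onorm_bound) auto
  qed auto
  then show "dist (l v1 a - l v2 a) (l v1 b - l v2 b) \<le> L * dist v1 v2 * dist a b"
    by (simp add: dist_norm)
qed

lemma ell_parameter_difference_lipschitz:
  fixes p :: "'s \<Rightarrow> 'v::real_inner \<Rightarrow> 't::real_inner \<Rightarrow> real"
  assumes q: "prob_space q" and int: "\<And>v \<theta>. integrable q (lfun p v \<theta>)"
    and grad: "\<And>\<xi> v \<theta>. \<xi> \<in> space q \<Longrightarrow>
        ((\<lambda>z. lfun p (fst z) (snd z) \<xi>) has_derivative (\<lambda>h. inner (gl \<xi> v \<theta>) h)) (at (v, \<theta>))"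
    and lip: "\<And>\<xi>. \<xi> \<in> space q \<Longrightarrow> L-lipschitz_on UNIV (\<lambda>z. gl \<xi> (fst z) (snd z))"
  shows "(L * dist v1 v2)-lipschitz_on UNIV (\<lambda>\<theta>. ell q p v1 \<theta> - ell q p v2 \<theta>)"
proof -
  have "(L * dist v1 v2)-lipschitz_on UNIV (\<lambda>\<theta>. \<integral>\<xi>. lfun p v1 \<theta> \<xi> - lfun p v2 \<theta> \<xi> \<partial>q)"
    using lipschitz_on_parameter_difference[of "\<lambda>v \<theta>. lfun p v \<theta> _", OF grad lip]
    by (intro lipschitz_on_integral[OF q]) (use int in auto)
  then show ?thesis
    using int by (simp add: ell_def)
qed

lemma lipschitz_on_gradient_in_parameter:
  fixes E :: "'v::metric_space \<Rightarrow> 't::real_inner \<Rightarrow> real"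
  assumes L: "0 \<le> L"
    and diff: "\<And>v1 v2. (L * dist v1 v2)-lipschitz_on UNIV (\<lambda>\<theta>. E v1 \<theta> - E v2 \<theta>)"
    and grad: "\<And>v \<theta>. (E v has_derivative (\<lambda>h. inner (g v \<theta>) h)) (at \<theta>)"
  shows "L-lipschitz_on UNIV (\<lambda>v. g v \<theta>)"
proof (rule lipschitz_onI)
  fix v1 v2
  have "((\<lambda>\<theta>. E v1 \<theta> - E v2 \<theta>) has_derivative (\<lambda>h. inner (g v1 \<theta> - g v2 \<theta>) h)) (at \<theta>)"
    using has_derivative_diff[OF grad grad] by (simp add: inner_diff_left)
  from lipschitz_on_gradient_norm_le[OF diff this]
  show "dist (g v1 \<theta>) (g v2 \<theta>) \<le> L * dist v1 v2" by (simp add: dist_norm)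
qed (rule L)

lemma theta_star_minimizer:
  fixes E :: "'v \<Rightarrow> 't::euclidean_space \<Rightarrow> real"
  assumes R: "0 \<le> R" and \<mu>: "0 < \<mu>" and sc: "strongly_convex_on \<mu> UNIV (E v)"
    and cont: "continuous_on UNIV (E v)"
  shows "theta_star E R v \<in> cball 0 R \<and> (\<forall>\<theta>\<in>cball 0 R. E v (theta_star E R v) \<le> E v \<theta>)"
proof -
  obtain a where a: "a \<in> cball 0 R" "\<forall>\<theta>\<in>cball 0 R. E v a \<le> E v \<theta>"
    using continuous_attains_inf[of "cball 0 R" "E v"] R continuous_on_subset[OF cont] by auto
  have sc_ball: "strongly_convex_on \<mu> (cball 0 R) (E v)"
    by (rule strongly_convex_on_subset[OF sc]) auto
  have "b = a" if b: "b \<in> cball 0 R" "\<forall>\<theta>\<in>cball 0 R. E v b \<le> E v \<theta>" for b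
  proof -
    have "E v a + \<mu>/2 * (norm (b - a))\<^sup>2 \<le> E v b"
      using strongly_convex_on_minimizer_growth[OF sc_ball] a b by blast
    moreover have "E v b \<le> E v a" using a b by blast
    ultimately have "\<mu> * (norm (b - a))\<^sup>2 \<le> 0" by simp
    with \<mu> show "b = a" by (simp add: mult_le_0_iff)
  qed
  then have "theta_star E R v = a"
    unfolding theta_star_def using a by (intro the_equality) blast+
  with a show ?thesis by simp
qed

lemma theta_star_lipschitz:
  fixes E :: "'v::metric_space \<Rightarrow> 't::euclidean_space \<Rightarrow> real"
  assumes R: "0 \<le> R" and \<mu>: "0 < \<mu>" and L: "0 \<le> L"
    and sc: "\<And>v. strongly_convex_on \<mu> UNIV (E v)" and cont: "\<And>v. continuous_on UNIV (E v)"
    and diff: "\<And>v1 v2. (L * dist v1 v2)-lipschitz_on UNIV (\<lambda>\<theta>. E v1 \<theta> - E v2 \<theta>)"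
  shows "(L/\<mu>)-lipschitz_on UNIV (theta_star E R)"
proof (rule lipschitz_onI)
  fix v1 v2 :: 'v
  define a b where "a = theta_star E R v1" and "b = theta_star E R v2"
  have sc_ball: "strongly_convex_on \<mu> (cball 0 R) (E v)" for v
    by (rule strongly_convex_on_subset[OF sc]) auto
  have min: "theta_star E R v \<in> cball 0 R \<and> (\<forall>\<theta>\<in>cball 0 R. E v (theta_star E R v) \<le> E v \<theta>)" for v
    by (rule theta_star_minimizer[OF R \<mu> sc cont])
  have "E v1 a + \<mu>/2 * (norm (b - a))\<^sup>2 \<le> E v1 b" "E v2 b + \<mu>/2 * (norm (a - b))\<^sup>2 \<le> E v2 a"
    using min[of v1] min[of v2] unfolding a_def b_def
    by (blast intro: strongly_convex_on_minimizer_growth[OF sc_ball])+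
  moreover have "(E v1 b - E v2 b) - (E v1 a - E v2 a) \<le> L * dist v1 v2 * norm (b - a)"
    using lipschitz_onD[OF diff[of v1 v2] UNIV_I UNIV_I, of b a] by (simp add: dist_real_def dist_norm abs_le_iff)
  ultimately have "\<mu> * norm (a - b) * norm (a - b) \<le> L * dist v1 v2 * norm (a - b)"
    by (simp add: norm_minus_commute power2_eq_square algebra_simps)
  then have "\<mu> * norm (a - b) \<le> L * dist v1 v2"
    by (cases "a = b") (auto simp: L)
  with \<mu> show "dist (theta_star E R v1) (theta_star E R v2) \<le> L / \<mu> * dist v1 v2"
    unfolding a_def b_def by (simp add: dist_norm field_simps)
qed (use L \<mu> in simp)

section \<open>Lipschitz continuity of the hypergradient\<close>

lemma lipschitz_on_compose_partial:
  fixes F :: "'a::metric_space \<Rightarrow> 'b::metric_space \<Rightarrow> 'c::metric_space"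
  assumes "\<And>v. A-lipschitz_on UNIV (F v)" "\<And>\<theta>. B-lipschitz_on UNIV (\<lambda>v. F v \<theta>)"
    and "C-lipschitz_on UNIV g"
  shows "(A * C + B)-lipschitz_on UNIV (\<lambda>v. F v (g v))"
proof (rule lipschitz_onI)
  fix v1 v2
  have "dist (F v1 (g v1)) (F v2 (g v2)) \<le> dist (F v1 (g v1)) (F v1 (g v2)) + dist (F v1 (g v2)) (F v2 (g v2))"
    by (rule dist_triangle)
  also have "\<dots> \<le> A * (C * dist v1 v2) + B * dist v1 v2"
    using assms lipschitz_on_nonneg[OF assms(1)]
    by (intro add_mono order_trans[OF lipschitz_onD[OF assms(1)]] mult_left_mono lipschitz_onD) auto
  finally show "dist (F v1 (g v1)) (F v2 (g v2)) \<le> (A * C + B) * dist v1 v2"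
    by (simp add: algebra_simps)
qed (use lipschitz_on_nonneg[OF assms(1)] lipschitz_on_nonneg[OF assms(2)]
        lipschitz_on_nonneg[OF assms(3)] in simp)

lemma linear_blinfun_apply: "linear (blinfun_apply A)"
  by (rule bounded_linear.linear[OF blinfun.bounded_linear_right])

lemma coercive_norm_le:
  fixes B :: "'a::real_inner \<Rightarrow> 'a"
  assumes "\<mu> * (norm u)\<^sup>2 \<le> inner (B u) u" and "0 < \<mu>"
  shows "norm u \<le> norm (B u) / \<mu>"
proof -
  have "\<mu> * norm u * norm u \<le> norm (B u) * norm u"
    using assms(1) norm_cauchy_schwarz[of "B u" u] by (simp add: power2_eq_square mult.assoc)
  then have "\<mu> * norm u \<le> norm (B u)"
    by (cases "u = 0") auto
  with assms(2) show ?thesis by (simp add: field_simps)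
qed

lemma coercive_linear_inv:
  fixes B :: "'a::euclidean_space \<Rightarrow> 'a"
  assumes lin: "linear B" and coercive: "\<And>k. \<mu> * (norm k)\<^sup>2 \<le> inner (B k) k" and "0 < \<mu>"
  shows "B (inv B w) = w"
proof -
  have "k = 0" if "B k = 0" for k
    using coercive_norm_le[where B = B, OF coercive[of k] \<open>0 < \<mu>\<close>] that by simp
  then have "inj B"
    by (simp add: linear_injective_0[OF lin])
  then show ?thesis
    using linear_inj_imp_surj[OF lin] by (simp add: surj_f_inv_f)
qed

lemma coercive_blinfun_inv_norm_le:
  fixes B :: "'a::euclidean_space \<Rightarrow>\<^sub>L 'a"
  assumes coercive: "\<And>k. \<mu> * (norm k)\<^sup>2 \<le> inner (B k) k" and \<mu>: "0 < \<mu>"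
  shows "norm (inv B g) \<le> norm g / \<mu>"
  using coercive_norm_le[where B = B and u = "inv B g", OF coercive \<mu>]
    coercive_linear_inv[OF linear_blinfun_apply coercive \<mu>]
  by simp

lemma inverse_perturbation_norm_le:
  fixes B1 B2 :: "'a::euclidean_space \<Rightarrow>\<^sub>L 'a"
  assumes coercive1: "\<And>k. \<mu> * (norm k)\<^sup>2 \<le> inner (B1 k) k"
    and coercive2: "\<And>k. \<mu> * (norm k)\<^sup>2 \<le> inner (B2 k) k" and \<mu>: "0 < \<mu>"
  shows "norm (inv B1 g1 - inv B2 g2) \<le> norm (g1 - g2) / \<mu> + norm (B1 - B2) * norm g2 / \<mu>\<^sup>2"
proof -
  define w2 where "w2 = inv B2 g2"
  have inv1: "B1 (inv B1 g1) = g1" and inv2: "B2 w2 = g2"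
    unfolding w2_def by (rule coercive_linear_inv[OF linear_blinfun_apply coercive1 \<mu>] coercive_linear_inv[OF linear_blinfun_apply coercive2 \<mu>])+
  have "norm w2 \<le> norm g2 / \<mu>"
    unfolding w2_def by (rule coercive_blinfun_inv_norm_le[OF coercive2 \<mu>])
  have "B1 (inv B1 g1 - w2) = (g1 - g2) - (B1 - B2) w2"
    using inv1 inv2 by (simp add: blinfun.diff_right blinfun.diff_left)
  then have "norm (inv B1 g1 - w2) \<le> norm ((g1 - g2) - (B1 - B2) w2) / \<mu>"
    using coercive_norm_le[where B = B1, OF coercive1 \<mu>, of "inv B1 g1 - w2"] by simp
  also have "\<dots> \<le> (norm (g1 - g2) + norm (B1 - B2) * norm w2) / \<mu>"
    using \<mu> by (intro divide_right_mono order_trans[OF norm_triangle_ineq4] add_left_mono norm_blinfun) auto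
  also have "\<dots> \<le> (norm (g1 - g2) + norm (B1 - B2) * (norm g2 / \<mu>)) / \<mu>"
    using \<open>norm w2 \<le> norm g2 / \<mu>\<close> \<mu> by (intro divide_right_mono add_left_mono mult_left_mono) auto
  finally show ?thesis
    using \<mu> by (simp add: w2_def add_divide_distrib power2_eq_square)
qed

lemma adjoint_norm_le:
  fixes A :: "'a::euclidean_space \<Rightarrow>\<^sub>L 'b::euclidean_space"
  shows "norm (adjoint A y) \<le> norm A * norm y"
proof -
  let ?z = "adjoint A y"
  have "norm ?z * norm ?z = inner ?z ?z"
    by (metis power2_eq_square power2_norm_eq_inner)
  also have "\<dots> = inner (A ?z) y"
    by (rule adjoint_works[OF linear_blinfun_apply])
  also have "\<dots> \<le> norm A * norm ?z * norm y"
    using norm_cauchy_schwarz[of "A ?z" y] norm_blinfun[of A ?z] by (meson mult_right_mono norm_ge_zero order_trans)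
  finally show ?thesis
    by (cases "?z = 0") (auto simp: ac_simps)
qed

lemma adjoint_blinfun_diff:
  fixes A B :: "'a::euclidean_space \<Rightarrow>\<^sub>L 'b::euclidean_space"
  shows "adjoint (A - B) = (\<lambda>y. adjoint A y - adjoint B y)"
  by (rule adjoint_unique)
    (simp add: inner_diff_right blinfun.diff_left inner_diff_left adjoint_works[OF linear_blinfun_apply])

lemma adjoint_inverse_perturbation_norm_le:
  fixes A1 A2 :: "'a::euclidean_space \<Rightarrow>\<^sub>L 'b::euclidean_space" and B1 B2 :: "'b \<Rightarrow>\<^sub>L 'b"
  assumes coercive1: "\<And>k. \<mu> * (norm k)\<^sup>2 \<le> inner (B1 k) k"
    and coercive2: "\<And>k. \<mu> * (norm k)\<^sup>2 \<le> inner (B2 k) k" and \<mu>: "0 < \<mu>"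
  shows "norm (adjoint A1 (inv B1 g1) - adjoint A2 (inv B2 g2))
    \<le> norm (A1 - A2) * (norm g1 / \<mu>) + norm A2 * (norm (g1 - g2) / \<mu> + norm (B1 - B2) * norm g2 / \<mu>\<^sup>2)"
proof -
  have "adjoint A1 (inv B1 g1) - adjoint A2 (inv B2 g2)
      = adjoint (A1 - A2) (inv B1 g1) + adjoint A2 (inv B1 g1 - inv B2 g2)"
    by (simp add: adjoint_blinfun_diff linear_diff[OF adjoint_linear[OF linear_blinfun_apply]])
  then have "norm (adjoint A1 (inv B1 g1) - adjoint A2 (inv B2 g2))
      \<le> norm (adjoint (A1 - A2) (inv B1 g1)) + norm (adjoint A2 (inv B1 g1 - inv B2 g2))"
    by (metis norm_triangle_ineq)
  also have "\<dots> \<le> norm (A1 - A2) * (norm g1 / \<mu>) + norm A2 * (norm (g1 - g2) / \<mu> + norm (B1 - B2) * norm g2 / \<mu>\<^sup>2)"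
    using coercive_blinfun_inv_norm_le[OF coercive1 \<mu>] inverse_perturbation_norm_le[OF coercive1 coercive2 \<mu>]
    by (intro add_mono order_trans[OF adjoint_norm_le] mult_left_mono) auto
  finally show ?thesis .
qed

lemma hypergrad_lipschitz:
  fixes fv :: "'v::euclidean_space \<Rightarrow> 't::euclidean_space \<Rightarrow> 'v" and ft :: "'v \<Rightarrow> 't \<Rightarrow> 't"
    and Htv :: "'v \<Rightarrow> 't \<Rightarrow> ('v \<Rightarrow>\<^sub>L 't)" and Htt :: "'v \<Rightarrow> 't \<Rightarrow> ('t \<Rightarrow>\<^sub>L 't)"
  assumes fv: "Cfv-lipschitz_on UNIV (\<lambda>v. fv v (ts v))" and ft: "Cft-lipschitz_on UNIV (\<lambda>v. ft v (ts v))"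
    and Htv: "Ctv-lipschitz_on UNIV (\<lambda>v. Htv v (ts v))" and Htt: "Ctt-lipschitz_on UNIV (\<lambda>v. Htt v (ts v))"
    and Htv_bound: "\<And>v. norm (Htv v (ts v)) \<le> L"
    and Htt_coercive: "\<And>v k. \<mu> * (norm k)\<^sup>2 \<le> inner (Htt v (ts v) k) k" and \<mu>: "0 < \<mu>"
    and ft_bound: "\<And>v. norm (ft v (ts v)) \<le> D"
  shows "(Cfv + Ctv * D / \<mu> + L * (Cft / \<mu> + Ctt * D / \<mu>\<^sup>2))-lipschitz_on UNIV (hypergrad fv ft Htv Htt ts)"
proof -
  have "0 \<le> D" "0 \<le> L"
    using ft_bound Htv_bound norm_ge_zero order_trans by blast+
  note nonneg = this lipschitz_on_nonneg[OF fv] lipschitz_on_nonneg[OF ft]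
    lipschitz_on_nonneg[OF Htv] lipschitz_on_nonneg[OF Htt]
  show ?thesis
  proof (rule lipschitz_onI)
    fix v1 v2 :: 'v
    let ?\<Delta> = "dist v1 v2" and ?adj = "\<lambda>v. adjoint (Htv v (ts v)) (inv (Htt v (ts v)) (ft v (ts v)))"
    have "hypergrad fv ft Htv Htt ts v1 - hypergrad fv ft Htv Htt ts v2
        = (fv v1 (ts v1) - fv v2 (ts v2)) - (?adj v1 - ?adj v2)"
      by (simp add: hypergrad_def)
    then have "norm (hypergrad fv ft Htv Htt ts v1 - hypergrad fv ft Htv Htt ts v2)
        \<le> norm (fv v1 (ts v1) - fv v2 (ts v2)) + norm (?adj v1 - ?adj v2)"
      by (metis norm_triangle_ineq4)
    also have "\<dots> \<le> Cfv * ?\<Delta> + (Ctv * ?\<Delta> * (D / \<mu>) + L * (Cft * ?\<Delta> / \<mu> + Ctt * ?\<Delta> * D / \<mu>\<^sup>2))"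
    proof (rule add_mono)
      show "norm (fv v1 (ts v1) - fv v2 (ts v2)) \<le> Cfv * ?\<Delta>"
        using lipschitz_on_normD[OF fv] by (simp add: dist_norm)
      show "norm (?adj v1 - ?adj v2) \<le> Ctv * ?\<Delta> * (D / \<mu>) + L * (Cft * ?\<Delta> / \<mu> + Ctt * ?\<Delta> * D / \<mu>\<^sup>2)"
        using lipschitz_onD[OF Htv, of v1 v2] lipschitz_onD[OF ft, of v1 v2] lipschitz_onD[OF Htt, of v1 v2]
          ft_bound Htv_bound[of v2] \<mu> nonneg
        by (intro order_trans[OF adjoint_inverse_perturbation_norm_le[OF Htt_coercive Htt_coercive \<mu>]]
            add_mono mult_mono divide_right_mono) (auto simp: dist_norm)
    qed
    finally show "dist (hypergrad fv ft Htv Htt ts v1) (hypergrad fv ft Htv Htt ts v2)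
        \<le> (Cfv + Ctv * D / \<mu> + L * (Cft / \<mu> + Ctt * D / \<mu>\<^sup>2)) * ?\<Delta>"
      by (simp add: dist_norm algebra_simps)
  qed (use nonneg \<mu> in simp)
qed

(* L_v is the constant of hypergrad_lipschitz when each partial Lipschitz bound is composed, via
   lipschitz_on_compose_partial, with the (L/mu)-Lipschitz lower-level solution. *)
lemma Lv_const_eq:
  assumes "0 < \<mu>"
  shows "Lv_const L \<mu> Lfv Lft Lbfv Lbft D1 Llv Llt Lblv Lblt
    = (Lfv * (L/\<mu>) + Lbfv) + (Llv * (L/\<mu>) + Lblv) * D1 / \<mu>
      + L * ((Lft * (L/\<mu>) + Lbft) / \<mu> + (Llt * (L/\<mu>) + Lblt) * D1 / \<mu>\<^sup>2)"
  using assms unfolding Lv_const_def by (simp add: field_simps power2_eq_square power3_eq_cube)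

section \<open>Gradient descent with inexact gradients\<close>

lemma lipschitz_gradient_upper_bound:
  fixes \<Phi> :: "'a::real_inner \<Rightarrow> real"
  assumes grad: "\<And>v. (\<Phi> has_derivative (\<lambda>h. inner (G v) h)) (at v)" and lip: "M-lipschitz_on UNIV G"
  shows "\<Phi> y \<le> \<Phi> x + inner (G x) (y - x) + M/2 * (norm (y - x))\<^sup>2"
proof -
  let ?d = "y - x"
  define \<psi> where "\<psi> t = \<Phi> (x + t *\<^sub>R ?d) - t * inner (G x) ?d - M/2 * t\<^sup>2 * (norm ?d)\<^sup>2" for t
  have deriv: "DERIV \<psi> t :> inner (G (x + t *\<^sub>R ?d) - G x) ?d - M * t * (norm ?d)\<^sup>2" for t
  proof -
    have "((\<lambda>t::real. x + t *\<^sub>R ?d) has_derivative (\<lambda>t. t *\<^sub>R ?d)) (at t)"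
      by (auto intro!: derivative_eq_intros)
    from has_derivative_compose[OF this grad]
    have "DERIV (\<lambda>t. \<Phi> (x + t *\<^sub>R ?d)) t :> inner (G (x + t *\<^sub>R ?d)) ?d"
      by (rule has_derivative_imp_has_field_derivative) simp
    then show ?thesis
      unfolding \<psi>_def by (auto intro!: derivative_eq_intros simp: power2_eq_square inner_diff_left)
  qed
  obtain z where z: "0 < z" "z < 1"
    and mvt: "\<psi> 1 - \<psi> 0 = inner (G (x + z *\<^sub>R ?d) - G x) ?d - M * z * (norm ?d)\<^sup>2"
    using MVT2[OF zero_less_one deriv] by auto
  have "inner (G (x + z *\<^sub>R ?d) - G x) ?d \<le> norm (G (x + z *\<^sub>R ?d) - G x) * norm ?d"
    by (rule norm_cauchy_schwarz)
  also have "\<dots> \<le> M * (z * norm ?d) * norm ?d"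
    using lipschitz_on_normD[OF lip, of "x + z *\<^sub>R ?d" x] z by (intro mult_right_mono) auto
  finally have "\<psi> 1 - \<psi> 0 \<le> 0"
    using mvt by (simp add: power2_eq_square algebra_simps)
  then show ?thesis
    unfolding \<psi>_def by simp
qed

lemma inexact_gradient_step:
  fixes \<Phi> :: "'a::real_inner \<Rightarrow> real"
  assumes grad: "\<And>v. (\<Phi> has_derivative (\<lambda>h. inner (G v) h)) (at v)" and lip: "M-lipschitz_on UNIV G"
    and M: "0 < M"
  shows "1/(16*M) * (norm (G v))\<^sup>2 \<le> \<Phi> v - \<Phi> (v - (1/(4*M)) *\<^sub>R h) + 3/(16*M) * (norm (G v - h))\<^sup>2"
proof -
  define \<alpha> where "\<alpha> = 1/(4*M)"
  have \<alpha>: "0 < \<alpha>" "M/2 * \<alpha>\<^sup>2 = \<alpha>/8" "1/(16*M) = \<alpha>/4" "3/(16*M) = 3/4 * \<alpha>"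
    unfolding \<alpha>_def using M by (simp_all add: power2_eq_square)
  have "M/2 * (norm (- (\<alpha> *\<^sub>R h)))\<^sup>2 = (M/2 * \<alpha>\<^sup>2) * (norm h)\<^sup>2"
    by (simp add: power_mult_distrib)
  then have descent: "\<Phi> (v - \<alpha> *\<^sub>R h) \<le> \<Phi> v - \<alpha> * inner (G v) h + \<alpha>/8 * (norm h)\<^sup>2"
    using lipschitz_gradient_upper_bound[OF grad lip, of "v - \<alpha> *\<^sub>R h" v] unfolding \<alpha>(2) by simp
  have expand: "(norm (G v - h))\<^sup>2 = (norm (G v))\<^sup>2 - 2 * inner (G v) h + (norm h)\<^sup>2"
    by (simp add: power2_norm_eq_inner inner_diff_left inner_diff_right inner_commute)
  then have "\<alpha> * (norm (G v - h))\<^sup>2 = \<alpha> * (norm (G v))\<^sup>2 - 2 * (\<alpha> * inner (G v) h) + \<alpha> * (norm h)\<^sup>2"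
    by (simp only: right_diff_distrib distrib_left mult.left_commute)
  moreover have "2 * inner (G v) h \<le> (norm (G v))\<^sup>2 + (norm h)\<^sup>2"
    using expand zero_le_power2[of "norm (G v - h)"] by linarith
  then have "2 * (\<alpha> * inner (G v) h) \<le> \<alpha> * (norm (G v))\<^sup>2 + \<alpha> * (norm h)\<^sup>2"
    using mult_left_mono[of _ _ \<alpha>] \<alpha>(1) by (fastforce simp: distrib_left mult.left_commute)
  moreover have "0 \<le> \<alpha> * (norm (G v))\<^sup>2" "0 \<le> \<alpha> * (norm h)\<^sup>2"
    using \<alpha>(1) by simp_all
  ultimately have "\<alpha>/4 * (norm (G v))\<^sup>2 \<le> \<Phi> v - \<Phi> (v - \<alpha> *\<^sub>R h) + 3/4 * \<alpha> * (norm (G v - h))\<^sup>2"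
    using descent by linarith
  then show ?thesis
    unfolding \<alpha>(3,4) \<alpha>_def .
qed

lemma inexact_gradient_descent_sum:
  fixes \<Phi> :: "'a::real_inner \<Rightarrow> real"
  assumes grad: "\<And>v. (\<Phi> has_derivative (\<lambda>h. inner (G v) h)) (at v)" and lip: "M-lipschitz_on UNIV G"
    and bdd: "bdd_below (range \<Phi>)"
    and iter: "\<And>k. k \<ge> 1 \<Longrightarrow> vs (Suc k) = vs k - (1/(4*M)) *\<^sub>R ghat k"
  shows "1/(16*M) * (\<Sum>k = 1..K. (norm (G (vs k)))\<^sup>2)
    \<le> \<Phi> (vs 1) - Inf (range \<Phi>) + 3/(16*M) * (\<Sum>k = 1..K. (norm (G (vs k) - ghat k))\<^sup>2)"
proof -
  have Inf_le: "Inf (range \<Phi>) \<le> \<Phi> v" for v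
    by (rule cInf_lower[OF rangeI bdd])
  show ?thesis
  proof (cases "M = 0")
    \<comment> \<open>then every coefficient \<open>1/(16*M)\<close> is \<open>0\<close> by HOL's division by zero\<close>
    case True
    then show ?thesis using Inf_le[of "vs 1"] by simp
  next
    case False
    then have M: "0 < M" using lipschitz_on_nonneg[OF lip] by simp
    have "1/(16*M) * (\<Sum>k = 1..K. (norm (G (vs k)))\<^sup>2)
        \<le> (\<Sum>k = 1..K. \<Phi> (vs k) - \<Phi> (vs (Suc k)) + 3/(16*M) * (norm (G (vs k) - ghat k))\<^sup>2)"
      unfolding sum_distrib_left using inexact_gradient_step[OF grad lip M] iter
      by (intro sum_mono) auto
    also have "\<dots> = \<Phi> (vs 1) - \<Phi> (vs (Suc K)) + 3/(16*M) * (\<Sum>k = 1..K. (norm (G (vs k) - ghat k))\<^sup>2)"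
      using sum_Suc_diff[of 1 K "\<lambda>k. - \<Phi> (vs k)"]
      by (simp add: sum.distrib sum_distrib_left)
    finally show ?thesis
      using Inf_le[of "vs (Suc K)"] by linarith
  qed
qed

theorem lemma6:
  fixes q :: "'s measure" and \<nu> :: "'s measure"
    and p :: "'s \<Rightarrow> 'v::euclidean_space \<Rightarrow> 't::euclidean_space \<Rightarrow> real"
    and R \<mu> L :: real
    and gl :: "'s \<Rightarrow> 'v \<Rightarrow> 't \<Rightarrow> 'v \<times> 't"
    and gell :: "'v \<Rightarrow> 't \<Rightarrow> 't"
    and Htv :: "'v \<Rightarrow> 't \<Rightarrow> ('v \<Rightarrow>\<^sub>L 't)" and Htt :: "'v \<Rightarrow> 't \<Rightarrow> ('t \<Rightarrow>\<^sub>L 't)"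
    and Llv Llt Lblv Lblt :: real
    and f :: "'v \<Rightarrow> 't \<Rightarrow> real" and fv :: "'v \<Rightarrow> 't \<Rightarrow> 'v" and ft :: "'v \<Rightarrow> 't \<Rightarrow> 't"
    and Lfv Lft Lbfv Lbft D1 :: real
    and vs :: "nat \<Rightarrow> 'v" and ghat :: "nat \<Rightarrow> 'v"
    and K :: nat
  defines "\<Phi> \<equiv> (\<lambda>v. f v (theta_star (ell q p) R v))"
    and "gradPhi \<equiv> hypergrad fv ft Htv Htt (theta_star (ell q p) R)"
    and "Lv \<equiv> Lv_const L \<mu> Lfv Lft Lbfv Lbft D1 Llv Llt Lblv Lblt"
  assumes R_pos: "R > 0"
    \<comment> \<open>setting: q a probability distribution; p(.;v,theta) probability densities w.r.t. a base measure nu\<close>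
    and q_prob: "prob_space q"
    and sets_nu: "sets \<nu> = sets q"
    and p_pos: "\<And>\<xi> v \<theta>. \<xi> \<in> space q \<Longrightarrow> p \<xi> v \<theta> > 0"
    and p_meas: "\<And>v \<theta>. (\<lambda>\<xi>. p \<xi> v \<theta>) \<in> borel_measurable \<nu>"
    and p_dens: "\<And>v \<theta>. (\<integral>\<^sup>+\<xi>. ennreal (p \<xi> v \<theta>) \<partial>\<nu>) = 1"
    and l_int: "\<And>v \<theta>. integrable q (lfun p v \<theta>)"
    \<comment> \<open>A1(i)\<close>
    and mu_pos: "\<mu> > 0" and L_pos: "L > 0"
    and A1_sc: "\<And>\<xi> v. \<xi> \<in> space q \<Longrightarrow> strongly_convex_on \<mu> UNIV (\<lambda>\<theta>. lfun p v \<theta> \<xi>)"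
    and A1_grad: "\<And>\<xi> v \<theta>. \<xi> \<in> space q \<Longrightarrow>
        ((\<lambda>z. lfun p (fst z) (snd z) \<xi>) has_derivative (\<lambda>h. inner (gl \<xi> v \<theta>) h)) (at (v, \<theta>))"
    and A1_C2: "\<And>\<xi>. \<xi> \<in> space q \<Longrightarrow> \<exists>H :: 'v \<times> 't \<Rightarrow> (('v \<times> 't) \<Rightarrow>\<^sub>L ('v \<times> 't)).
        continuous_on UNIV H \<and>
        (\<forall>z. ((\<lambda>w. gl \<xi> (fst w) (snd w)) has_derivative blinfun_apply (H z)) (at z))"
    and A1_lip: "\<And>\<xi>. \<xi> \<in> space q \<Longrightarrow> L-lipschitz_on UNIV (\<lambda>z. gl \<xi> (fst z) (snd z))"
    \<comment> \<open>A1(ii): second derivatives of ell (g_ell = grad_theta ell) and their Lipschitz continuity\<close>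
    and ell_grad: "\<And>v \<theta>. ((ell q p) v has_derivative (\<lambda>h. inner (gell v \<theta>) h)) (at \<theta>)"
    and Htv_deriv: "\<And>v \<theta>. ((\<lambda>v'. gell v' \<theta>) has_derivative blinfun_apply (Htv v \<theta>)) (at v)"
    and Htt_deriv: "\<And>v \<theta>. (gell v has_derivative blinfun_apply (Htt v \<theta>)) (at \<theta>)"
    and A1_Htv_th: "\<And>v. Llv-lipschitz_on UNIV (Htv v)"
    and A1_Htt_th: "\<And>v. Llt-lipschitz_on UNIV (Htt v)"
    and A1_Htv_v: "\<And>\<theta>. Lblv-lipschitz_on UNIV (\<lambda>v. Htv v \<theta>)"
    and A1_Htt_v: "\<And>\<theta>. Lblt-lipschitz_on UNIV (\<lambda>v. Htt v \<theta>)"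
    \<comment> \<open>f differentiable with partial gradients fv, ft\<close>
    and f_deriv: "\<And>v \<theta>. ((\<lambda>z. f (fst z) (snd z)) has_derivative
        (\<lambda>(h, k). inner (fv v \<theta>) h + inner (ft v \<theta>) k)) (at (v, \<theta>))"
    \<comment> \<open>A2\<close>
    and A2_fv_th: "\<And>v. Lfv-lipschitz_on UNIV (fv v)"
    and A2_ft_th: "\<And>v. Lft-lipschitz_on UNIV (ft v)"
    and A2_fv_v: "\<And>\<theta>. Lbfv-lipschitz_on UNIV (\<lambda>v. fv v \<theta>)"
    and A2_ft_v: "\<And>\<theta>. Lbft-lipschitz_on UNIV (\<lambda>v. ft v \<theta>)"
    and A2_bound: "\<And>v \<theta>. norm (ft v \<theta>) \<le> D1"
    \<comment> \<open>the stated hypergradient formula is the gradient of Phi\<close>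
    and Phi_grad: "\<And>v. (\<Phi> has_derivative (\<lambda>h. inner (gradPhi v) h)) (at v)"
    \<comment> \<open>Phi* = inf Phi > -infinity\<close>
    and Phi_bdd: "bdd_below (range \<Phi>)"
    \<comment> \<open>iteration\<close>
    and iter: "\<And>k. k \<ge> 1 \<Longrightarrow> vs (Suc k) = vs k - (1 / (4 * Lv)) *\<^sub>R ghat k"
    and K_ge: "K \<ge> 1"
  shows "1 / (16 * Lv) * (\<Sum>k = 1..K. (norm (gradPhi (vs k)))\<^sup>2)
         \<le> \<Phi> (vs 1) - Inf (range \<Phi>) + 3 / (16 * Lv) * (\<Sum>k = 1..K. (norm (gradPhi (vs k) - ghat k))\<^sup>2)"
proof -
  have sc: "strongly_convex_on \<mu> UNIV (ell q p v)" for v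
    using strongly_convex_on_integral[OF q_prob l_int A1_sc] by (simp add: ell_def[abs_def])
  have diff: "(L * dist v1 v2)-lipschitz_on UNIV (\<lambda>\<theta>. ell q p v1 \<theta> - ell q p v2 \<theta>)" for v1 v2
    by (rule ell_parameter_difference_lipschitz[OF q_prob l_int A1_grad A1_lip])
  have cont: "continuous_on UNIV (ell q p v)" for v
    using ell_grad by (intro has_derivative_continuous_on) auto
  have ts_lip: "(L/\<mu>)-lipschitz_on UNIV (theta_star (ell q p) R)"
    using R_pos mu_pos L_pos sc cont diff by (intro theta_star_lipschitz) auto
  have Htv_bound: "norm (Htv v \<theta>) \<le> L" for v \<theta>
    using L_pos diff ell_grad
    by (intro lipschitz_on_derivative_norm_le[OF lipschitz_on_gradient_in_parameter Htv_deriv]) auto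
  have Htt_coercive: "\<mu> * (norm k)\<^sup>2 \<le> inner (Htt v \<theta> k) k" for v \<theta> k
    by (rule strongly_convex_on_hessian_coercive[OF sc ell_grad Htt_deriv])
  have gradPhi_lip: "Lv-lipschitz_on UNIV gradPhi"
    unfolding gradPhi_def Lv_def Lv_const_eq[OF mu_pos]
    by (intro hypergrad_lipschitz lipschitz_on_compose_partial[OF _ _ ts_lip] Htv_bound Htt_coercive
        mu_pos A2_bound A2_fv_th A2_fv_v A2_ft_th A2_ft_v A1_Htv_th A1_Htv_v A1_Htt_th A1_Htt_v)
  show ?thesis
    by (rule inexact_gradient_descent_sum[OF Phi_grad gradPhi_lip Phi_bdd]) (rule iter)
qed

end
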